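(* There exists a sequence $(G_n)_{n\in\mathbb{N}}$ of graphs such that $|V(G_n)|=n$ for all $n$, $R_2(G_n)=O(n)$ and $R_3(G_n)=\Omega(n\log n)$.
   Context: For a graph $G$ and integer $r\geqslant 2$, the $r$-colour Ramsey number $R_r(G)$ is the smallest integer $N$ such that every colouring of the edges of the complete graph $K_N$ with $r$ colours contains a copy of $G$ all of whose edges have the same colour. *)

theory Defs
  imports Main "HOL-Library.Landau_Symbols"
begin

definition simple_graph :: "nat \<Rightarrow> nat set set \<Rightarrow> bool" where
  "simple_graph n E \<longleftrightarrow> (\<forall>e\<in>E. e \<subseteq> {0..<n} \<and> card e = 2)"

definition edge_colouring :: "nat \<Rightarrow> nat \<Rightarrow> (nat set \<Rightarrow> nat) \<Rightarrow> bool" where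
  "edge_colouring r N \<chi> \<longleftrightarrow> (\<forall>e. e \<subseteq> {0..<N} \<and> card e = 2 \<longrightarrow> \<chi> e < r)"

definition has_mono_copy :: "nat \<Rightarrow> (nat set \<Rightarrow> nat) \<Rightarrow> nat \<Rightarrow> nat set set \<Rightarrow> bool" where
  "has_mono_copy N \<chi> n E \<longleftrightarrow>
     (\<exists>f c. inj_on f {0..<n} \<and> f ` {0..<n} \<subseteq> {0..<N} \<and> (\<forall>e\<in>E. \<chi> (f ` e) = c))"

definition ramsey_arrow :: "nat \<Rightarrow> nat \<Rightarrow> nat \<Rightarrow> nat set set \<Rightarrow> bool" where
  "ramsey_arrow r N n E \<longleftrightarrow> (\<forall>\<chi>. edge_colouring r N \<chi> \<longrightarrow> has_mono_copy N \<chi> n E)"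

definition ramsey_number :: "nat \<Rightarrow> nat \<Rightarrow> nat set set \<Rightarrow> nat" where
  "ramsey_number r n E = (LEAST N. ramsey_arrow r N n E)"

end

(*
  Let s be about log_4 n and l = n div s, and let G_n consist of a clique on s vertices, one of
  which is also joined to l further vertices, padded with isolated vertices to n vertices.

  Two colours: every vertex has at least s + l - 1 neighbours in some colour. If s(s + l)
  vertices are rich in one colour only, few edges of the other colour leave them and a greedy
  argument finds a clique of the rich colour among them; if 4^s vertices are rich in both
  colours, Ramsey's theorem finds a monochromatic clique among them. Either way every vertex
  of the clique has enough neighbours of the clique's colour to complete the star, so
  R_2(G_n) = O(s(s + l) + 4^s) = O(n).

  Three colours: split (s - 1)^2 blocks of s + l - 1 vertices into s - 1 classes of s - 1
  blocks, and colour an edge 0 inside a block, 1 between blocks of the same class and 2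
  between classes. A star with s + l vertices does not fit into a block, and a clique of
  colour 1 or 2 has at most s - 1 vertices, so R_3(G_n) > (s - 1)^2 (s + l - 1), which is
  of order s n = Omega(n log n).
*)
theory Submission
  imports Defs "HOL-Library.Ramsey" "HOL-Library.Log_Nat"
begin

section \<open>Ramsey numbers of graphs\<close>

text \<open>The library states the Erd\<ouml>s--Szekeres bound only for initial segments of \<^typ>\<open>nat\<close>.\<close>

lemma clique_or_indep_if_choose_le_card:
  assumes "finite V" and "(m + n) choose m \<le> card V"
  shows "\<exists>R\<subseteq>V. card R = m \<and> clique R E \<or> card R = n \<and> indep R E"
proof -
  let ?N = "(m + n) choose m"
  have N: "partn_lst {..<?N} [m, n] 2"
    using ramsey2_full[of 2 m n] by (simp add: ES2_choose)
  obtain v where v: "inj_on v {..<?N}" "v ` {..<?N} \<subseteq> V"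
    using assms by (metis card_le_inj card_lessThan finite_lessThan)
  define f where "f e = (if v ` e \<in> E then 0 else 1 :: nat)" for e
  have "f \<in> nsets {..<?N} 2 \<rightarrow> {..<length [m, n]}"
    by (simp add: f_def)
  then obtain i U where i: "i < 2" and U: "U \<in> nsets {..<?N} ([m, n] ! i)"
    and mono: "f ` nsets U 2 \<subseteq> {i}"
    using partn_lstE[OF N] by (metis length_Cons list.size(3) numeral_2_eq_2 One_nat_def)
  have "v ` U \<subseteq> V" and "card (v ` U) = [m, n] ! i"
    using U v by (auto simp: nsets_def card_image inj_on_subset)
  moreover have "f {x, y} = i" if "x \<in> U" "y \<in> U" "x \<noteq> y" for x y
    using mono that by (auto simp: image_subset_iff)
  then have "(i = 0 \<longrightarrow> clique (v ` U) E) \<and> (i = 1 \<longrightarrow> indep (v ` U) E)"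
    unfolding clique_def indep_def by (force simp: f_def split: if_splits)
  ultimately show ?thesis
    using i by (metis less_2_cases nth_Cons_0 nth_Cons_Suc One_nat_def)
qed

lemma clique_if_few_non_neighbours:
  assumes "finite X" and "a * (D + 1) \<le> card X"
    and "\<forall>v\<in>X. card {w\<in>X. w \<noteq> v \<and> {v, w} \<notin> E} \<le> D"
  shows "\<exists>K\<subseteq>X. card K = a \<and> clique K E"
  using assms
proof (induction a arbitrary: X)
  case 0
  then show ?case by auto
next
  case (Suc a)
  have "X \<noteq> {}" using Suc.prems(2) by auto
  then obtain v where v: "v \<in> X" by blast
  define A where "A = {w\<in>X. w \<noteq> v \<and> {v, w} \<in> E}"
  define B where "B = {w\<in>X. w \<noteq> v \<and> {v, w} \<notin> E}"
  have "A \<union> B = X - {v}"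
    unfolding A_def B_def by blast
  then have "card X - 1 = card (A \<union> B)"
    using v Suc.prems(1) by simp
  also have "\<dots> \<le> card A + D"
    using card_Un_le[of A B] Suc.prems(3) v unfolding B_def by (meson add_left_mono le_trans)
  finally have "card X - 1 \<le> card A + D" .
  then have "a * (D + 1) \<le> card A"
    using Suc.prems(2) by simp
  moreover have "\<forall>u\<in>A. card {w\<in>A. w \<noteq> u \<and> {u, w} \<notin> E} \<le> D"
  proof
    fix u assume "u \<in> A"
    have "{w\<in>A. w \<noteq> u \<and> {u, w} \<notin> E} \<subseteq> {w\<in>X. w \<noteq> u \<and> {u, w} \<notin> E}"
      unfolding A_def by blast
    then show "card {w\<in>A. w \<noteq> u \<and> {u, w} \<notin> E} \<le> D"
      using Suc.prems(1,3) \<open>u \<in> A\<close> unfolding A_def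
      by (metis (no_types, lifting) card_mono finite_subset le_trans mem_Collect_eq subsetI)
  qed
  ultimately obtain K where K: "K \<subseteq> A" "card K = a" "clique K E"
    using Suc.IH[of A] Suc.prems(1) unfolding A_def by auto
  have "K \<subseteq> X - {v}" and "finite K"
    using K(1) Suc.prems(1) finite_subset[of K X] unfolding A_def by auto
  moreover have "clique ({v} \<union> K) E"
    using K(1,3) unfolding A_def by (intro clique_Un) (auto simp: clique_def)
  ultimately show ?case
    using K(2) v by (intro exI[of _ "insert v K"]) (auto simp: subset_Diff_insert)
qed

lemma has_mono_copy_if_clique:
  assumes "simple_graph n E" and "K \<subseteq> {0..<N}" and "card K = n"
    and "clique K {e. \<chi> e = c}"
  shows "has_mono_copy N \<chi> n E"
proof -
  obtain h where h: "bij_betw h {0..<n} K"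
    using assms(2,3) ex_bij_betw_nat_finite finite_subset by blast
  have "\<chi> (h ` e) = c" if "e \<in> E" for e
  proof -
    obtain i j where "e = {i, j}" "i \<noteq> j" "e \<subseteq> {0..<n}"
      using assms(1) \<open>e \<in> E\<close> unfolding simple_graph_def by (meson card_2_iff)
    moreover from this have "h i \<noteq> h j" "h i \<in> K" "h j \<in> K"
      using bij_betw_apply[OF h] inj_on_eq_iff[OF bij_betw_imp_inj_on[OF h]] by auto
    ultimately show ?thesis
      using assms(4) unfolding clique_def by simp
  qed
  moreover have "inj_on h {0..<n}" and "h ` {0..<n} \<subseteq> {0..<N}"
    using h assms(2) by (auto simp: bij_betw_def)
  ultimately show ?thesis
    unfolding has_mono_copy_def by blast
qed

lemma ramsey_arrow_mono:
  assumes "ramsey_arrow r N n E" and "N \<le> M"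
  shows "ramsey_arrow r M n E"
  unfolding ramsey_arrow_def
proof (intro allI impI)
  fix \<chi> assume "edge_colouring r M \<chi>"
  moreover have "{0..<N} \<subseteq> {0..<M}"
    using assms(2) by auto
  ultimately have "edge_colouring r N \<chi>"
    unfolding edge_colouring_def by blast
  then show "has_mono_copy M \<chi> n E"
    using assms unfolding ramsey_arrow_def has_mono_copy_def by fastforce
qed

lemma ramsey_arrow_exists:
  assumes "simple_graph n E"
  shows "\<exists>N. ramsey_arrow r N n E"
proof -
  obtain N :: nat where N: "partn_lst {..<N} (replicate r n) 2"
    using ramsey_full by blast
  have "has_mono_copy N \<chi> n E" if "edge_colouring r N \<chi>" for \<chi>
  proof -
    have "\<chi> \<in> nsets {..<N} 2 \<rightarrow> {..<r}"
      using that unfolding edge_colouring_def nsets_def by (auto simp: lessThan_atLeast0)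
    then obtain i H where "i < r" and H: "H \<in> nsets {..<N} n" and "\<chi> ` nsets H 2 \<subseteq> {i}"
      using partn_lstE[OF N] by (metis length_replicate nth_replicate)
    then have "clique H {e. \<chi> e = i}"
      unfolding clique_def by (auto simp: image_subset_iff)
    then show ?thesis
      using H assms by (intro has_mono_copy_if_clique) (auto simp: nsets_def)
  qed
  then show ?thesis
    unfolding ramsey_arrow_def by blast
qed

lemma ramsey_number_le: "ramsey_arrow r N n E \<Longrightarrow> ramsey_number r n E \<le> N"
  unfolding ramsey_number_def by (rule Least_le)

lemma ramsey_number_gt:
  assumes "simple_graph n E" and "\<not> ramsey_arrow r N n E"
  shows "N < ramsey_number r n E"
proof (rule ccontr)
  assume "\<not> N < ramsey_number r n E"
  moreover have "ramsey_arrow r (ramsey_number r n E) n E"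
    unfolding ramsey_number_def using ramsey_arrow_exists[OF assms(1)] by (rule LeastI_ex)
  ultimately show False
    using assms(2) ramsey_arrow_mono by (meson not_less)
qed

lemma ramsey_arrow_empty_graph: "ramsey_arrow r n n {}"
  unfolding ramsey_arrow_def has_mono_copy_def by (intro allI impI exI[of _ id]) auto

section \<open>A clique with a pendant star\<close>

definition clique_star :: "nat \<Rightarrow> nat \<Rightarrow> nat set set" where
  "clique_star s l = {{i, j} | i j. i < j \<and> j < s} \<union> {{0, j} | j. 0 < j \<and> j < s + l}"

lemma clique_edge_in_clique_star:
  assumes "i \<noteq> j" and "i < s" and "j < s"
  shows "{i, j} \<in> clique_star s l"
proof (cases "i < j")
  case True
  then show ?thesis
    using assms(3) unfolding clique_star_def by blast
next
  case False
  then have "j < i"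
    using assms(1) by simp
  then have "{j, i} \<in> clique_star s l"
    using assms(2) unfolding clique_star_def by blast
  then show ?thesis
    by (simp add: insert_commute)
qed

lemma star_edge_in_clique_star: "0 < j \<Longrightarrow> j < s + l \<Longrightarrow> {0, j} \<in> clique_star s l"
  unfolding clique_star_def by blast

lemma simple_graph_clique_star: "s + l \<le> n \<Longrightarrow> simple_graph n (clique_star s l)"
  unfolding simple_graph_def clique_star_def by auto

definition colour_nbhd :: "nat \<Rightarrow> (nat set \<Rightarrow> nat) \<Rightarrow> nat \<Rightarrow> nat \<Rightarrow> nat set" where
  "colour_nbhd N \<chi> c v = {w\<in>{0..<N}. w \<noteq> v \<and> \<chi> {v, w} = c}"

lemma finite_colour_nbhd [simp]: "finite (colour_nbhd N \<chi> c v)"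
  unfolding colour_nbhd_def by simp

definition rich_vertices :: "nat \<Rightarrow> (nat set \<Rightarrow> nat) \<Rightarrow> nat \<Rightarrow> nat \<Rightarrow> nat set" where
  "rich_vertices N \<chi> d c = {v\<in>{0..<N}. d \<le> card (colour_nbhd N \<chi> c v)}"

lemma rich_vertices_subset: "rich_vertices N \<chi> d c \<subseteq> {0..<N}"
  unfolding rich_vertices_def by blast

lemma extend_distinct_list:
  assumes "distinct ys" and "set ys \<subseteq> A" and "finite A" and "length ys \<le> n" and "n \<le> card A"
  obtains zs where "distinct (ys @ zs)" and "set zs \<subseteq> A" and "length (ys @ zs) = n"
proof -
  have "card (A - set ys) = card A - length ys"
    using assms(1-3) by (simp add: card_Diff_subset distinct_card)
  then have "n - length ys \<le> card (A - set ys)"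
    using assms(5) by simp
  then obtain T where T: "T \<subseteq> A - set ys" "card T = n - length ys"
    by (meson obtain_subset_with_card_n)
  then have "finite T"
    using assms(3) finite_subset by blast
  then obtain zs where zs: "distinct zs" "set zs = T"
    using finite_distinct_list by blast
  show ?thesis
  proof
    show "distinct (ys @ zs)" and "set zs \<subseteq> A"
      using zs T(1) assms(1) by auto
    show "length (ys @ zs) = n"
      using zs T(2) assms(4) distinct_card by fastforce
  qed
qed

lemma has_mono_copy_of_list:
  assumes "distinct ys" and "set ys \<subseteq> {0..<N}" and "length ys \<le> n" and "n \<le> N"
    and "\<forall>e\<in>E. e \<subseteq> {0..<length ys} \<and> \<chi> ((!) ys ` e) = c"
  shows "has_mono_copy N \<chi> n E"
proof -
  obtain zs where xs: "distinct (ys @ zs)" "set zs \<subseteq> {0..<N}" "length (ys @ zs) = n"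
    using extend_distinct_list[OF assms(1,2)] assms(3,4) by auto
  have "(!) (ys @ zs) ` e = (!) ys ` e" if "e \<subseteq> {0..<length ys}" for e
    using that by (force simp: nth_append)
  then have "\<forall>e\<in>E. \<chi> ((!) (ys @ zs) ` e) = c"
    using assms(5) by simp
  moreover have "inj_on ((!) (ys @ zs)) {0..<n}"
    using xs by (intro inj_on_nth) auto
  moreover have "set (ys @ zs) \<subseteq> {0..<N}"
    using xs(2) assms(2) by simp
  then have "(!) (ys @ zs) ` {0..<n} \<subseteq> {0..<N}"
    using xs(3) nth_mem[of _ "ys @ zs"] by fastforce
  ultimately show ?thesis
    unfolding has_mono_copy_def by blast
qed

lemma has_mono_copy_clique_star_of_list:
  assumes "distinct ys" and "set ys \<subseteq> {0..<N}" and "length ys = s + l" and "s + l \<le> n"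
    and "n \<le> N"
    and clique_colour: "\<And>i j. i < s \<Longrightarrow> j < s \<Longrightarrow> i \<noteq> j \<Longrightarrow> \<chi> {ys ! i, ys ! j} = c"
    and star_colour: "\<And>j. 0 < j \<Longrightarrow> j < s + l \<Longrightarrow> \<chi> {ys ! 0, ys ! j} = c"
  shows "has_mono_copy N \<chi> n (clique_star s l)"
proof (rule has_mono_copy_of_list[OF assms(1,2)])
  show "length ys \<le> n" and "n \<le> N"
    using assms(3-5) by auto
  show "\<forall>e\<in>clique_star s l. e \<subseteq> {0..<length ys} \<and> \<chi> ((!) ys ` e) = c"
  proof
    fix e assume "e \<in> clique_star s l"
    then consider (clique) i j where "e = {i, j}" "i < j" "j < s"
      | (star) j where "e = {0, j}" "0 < j" "j < s + l"
      unfolding clique_star_def by blast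
    then show "e \<subseteq> {0..<length ys} \<and> \<chi> ((!) ys ` e) = c"
    proof cases
      case clique
      then show ?thesis
        using clique_colour[of i j] assms(3) by auto
    next
      case star
      then show ?thesis
        using star_colour[of j] assms(3) by auto
    qed
  qed
qed

lemma card_colour_nbhd_Diff:
  assumes "finite K" and "card K = s" and "v \<in> K"
    and "s + l - 1 \<le> card (colour_nbhd N \<chi> c v)"
  shows "l \<le> card (colour_nbhd N \<chi> c v - K)"
proof -
  have "colour_nbhd N \<chi> c v \<inter> K \<subseteq> K - {v}"
    unfolding colour_nbhd_def by auto
  then have "card (colour_nbhd N \<chi> c v \<inter> K) \<le> s - 1"
    using assms(1-3) by (metis card_Diff_singleton card_mono finite_Diff)
  moreover have "1 \<le> s"
    using assms(1-3) by (metis One_nat_def Suc_leI card_gt_0_iff empty_iff)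
  ultimately show ?thesis
    using assms(4) by (simp add: card_Diff_subset_Int)
qed

lemma has_mono_copy_clique_star:
  assumes rich: "K \<subseteq> rich_vertices N \<chi> (s + l - 1) c" and K: "card K = s" "0 < s"
    "clique K {e. \<chi> e = c}" and "s + l \<le> n" and "n \<le> N"
  shows "has_mono_copy N \<chi> n (clique_star s l)"
proof -
  have "K \<subseteq> {0..<N}"
    using rich rich_vertices_subset by blast
  then have "finite K"
    using finite_subset by auto
  then obtain v where v: "v \<in> K"
    using K(1,2) by fastforce
  let ?B = "colour_nbhd N \<chi> c v"
  have "s + l - 1 \<le> card ?B"
    using rich v unfolding rich_vertices_def by auto
  then obtain S where S: "S \<subseteq> ?B - K" "card S = l"
    using card_colour_nbhd_Diff[OF \<open>finite K\<close> K(1) v \<open>s + l - 1 \<le> card ?B\<close>]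
    by (meson obtain_subset_with_card_n)
  obtain ks where ks: "distinct ks" "set ks = K - {v}"
    using \<open>finite K\<close> finite_distinct_list by (metis finite_Diff)
  obtain ss where ss: "distinct ss" "set ss = S"
    using S finite_distinct_list finite_subset by (metis finite_Diff finite_colour_nbhd)
  define ys where "ys = v # ks @ ss"
  have "length ks = s - 1"
    using ks K(1) v \<open>finite K\<close> by (metis distinct_card card_Diff_singleton)
  moreover have "length ss = l"
    using ss S(2) by (metis distinct_card)
  ultimately have len_ys: "length ys = s + l"
    using K(2) unfolding ys_def by simp
  have "distinct ys"
    using ks ss S(1) v unfolding ys_def by auto
  have ys_K: "ys ! i \<in> K" if "i < s" for i
  proof -
    have "set (take s ys) = K"
      using ks v \<open>length ks = s - 1\<close> K(2) unfolding ys_def by (cases s) auto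
    then show ?thesis
      using that len_ys by (metis le_add1 length_take min.absorb2 nth_mem nth_take)
  qed
  have ys_B: "ys ! j \<in> ?B" if "0 < j" "j < s + l" for j
  proof -
    have "ys ! j \<noteq> ys ! 0"
      using that len_ys \<open>distinct ys\<close> by (subst nth_eq_iff_index_eq) auto
    then have "ys ! j \<in> (K - {v}) \<union> S"
      using that len_ys nth_mem[of j ys] ks ss unfolding ys_def by auto
    moreover have "K - {v} \<subseteq> ?B"
      using K(3) v \<open>K \<subseteq> {0..<N}\<close> unfolding clique_def colour_nbhd_def by auto
    ultimately show ?thesis
      using S(1) by auto
  qed
  show ?thesis
  proof (rule has_mono_copy_clique_star_of_list[OF \<open>distinct ys\<close> _ len_ys assms(5,6)])
    show "set ys \<subseteq> {0..<N}"
      using ks ss \<open>K \<subseteq> {0..<N}\<close> S(1) v unfolding ys_def colour_nbhd_def by auto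
    show "\<chi> {ys ! i, ys ! j} = c" if "i < s" "j < s" "i \<noteq> j" for i j
      using that ys_K K(3) \<open>distinct ys\<close> len_ys unfolding clique_def
      by (simp add: nth_eq_iff_index_eq)
    show "\<chi> {ys ! 0, ys ! j} = c" if "0 < j" "j < s + l" for j
      using ys_B[OF that] unfolding colour_nbhd_def ys_def by simp
  qed
qed

lemma has_mono_copy_clique_starE:
  assumes "has_mono_copy N \<chi> n (clique_star s l)" and "s + l \<le> n"
  obtains f c where "inj_on f {0..<s + l}" and "f ` {0..<s + l} \<subseteq> {0..<N}"
    and "\<forall>w\<in>f ` {0..<s + l}. w \<noteq> f 0 \<longrightarrow> \<chi> {f 0, w} = c"
    and "clique (f ` {0..<s}) {e. \<chi> e = c}"
proof -
  obtain f c where f: "inj_on f {0..<n}" "f ` {0..<n} \<subseteq> {0..<N}"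
    and mono: "\<forall>e\<in>clique_star s l. \<chi> (f ` e) = c"
    using assms(1) unfolding has_mono_copy_def by blast
  have edge: "\<chi> {f i, f j} = c" if "{i, j} \<in> clique_star s l" for i j
    using mono that by force
  have "\<forall>w\<in>f ` {0..<s + l}. w \<noteq> f 0 \<longrightarrow> \<chi> {f 0, w} = c"
  proof (intro ballI impI)
    fix w assume "w \<in> f ` {0..<s + l}" and "w \<noteq> f 0"
    then obtain j where "w = f j" "j < s + l"
      by auto
    moreover from this have "0 < j"
      using \<open>w \<noteq> f 0\<close> by (cases j) auto
    ultimately show "\<chi> {f 0, w} = c"
      using edge star_edge_in_clique_star by simp
  qed
  moreover have "clique (f ` {0..<s}) {e. \<chi> e = c}"
    unfolding clique_def
  proof (intro ballI impI)
    fix x y assume "x \<in> f ` {0..<s}" and "y \<in> f ` {0..<s}" and "x \<noteq> y"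
    then obtain i j where "x = f i" "y = f j" "i < s" "j < s"
      by auto
    moreover from this have "i \<noteq> j"
      using \<open>x \<noteq> y\<close> by auto
    ultimately show "{x, y} \<in> {e. \<chi> e = c}"
      using edge clique_edge_in_clique_star by simp
  qed
  moreover have "inj_on f {0..<s + l}" and "f ` {0..<s + l} \<subseteq> {0..<N}"
    using f assms(2) by (auto intro: inj_on_subset)
  ultimately show ?thesis
    using that by blast
qed

section \<open>Two colours\<close>

lemma two_colouring_cases:
  assumes "edge_colouring 2 N \<chi>" and "u < N" and "w < N" and "u \<noteq> w"
  shows "\<chi> {u, w} = 0 \<or> \<chi> {u, w} = 1"
proof -
  have "{u, w} \<subseteq> {0..<N}" and "card {u, w} = 2"
    using assms(2-4) by auto
  then have "\<chi> {u, w} < 2"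
    using assms(1) unfolding edge_colouring_def by blast
  then show ?thesis
    by linarith
qed

lemma card_colour_nbhd_sum:
  assumes "edge_colouring 2 N \<chi>" and "v < N"
  shows "card (colour_nbhd N \<chi> 0 v) + card (colour_nbhd N \<chi> 1 v) = N - 1"
proof -
  have "colour_nbhd N \<chi> 0 v \<union> colour_nbhd N \<chi> 1 v = {0..<N} - {v}"
    using two_colouring_cases[OF assms(1) assms(2)] unfolding colour_nbhd_def by (auto; metis)
  moreover have "colour_nbhd N \<chi> 0 v \<inter> colour_nbhd N \<chi> 1 v = {}"
    unfolding colour_nbhd_def by auto
  ultimately show ?thesis
    using assms(2) card_Un_disjoint[of "colour_nbhd N \<chi> 0 v" "colour_nbhd N \<chi> 1 v"] by simp
qed

lemma clique_if_other_colour_sparse: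
  assumes "edge_colouring 2 N \<chi>" and "c \<le> 1" and "X \<subseteq> {0..<N}" and "a * (D + 1) \<le> card X"
    and "\<forall>v\<in>X. card (colour_nbhd N \<chi> (1 - c) v) \<le> D"
  shows "\<exists>K\<subseteq>X. card K = a \<and> clique K {e. \<chi> e = c}"
proof (rule clique_if_few_non_neighbours)
  show "finite X"
    using assms(3) finite_subset by blast
  show "\<forall>v\<in>X. card {w\<in>X. w \<noteq> v \<and> {v, w} \<notin> {e. \<chi> e = c}} \<le> D"
  proof
    fix v assume "v \<in> X"
    have "{w\<in>X. w \<noteq> v \<and> {v, w} \<notin> {e. \<chi> e = c}} \<subseteq> colour_nbhd N \<chi> (1 - c) v"
    proof
      fix w assume w: "w \<in> {w\<in>X. w \<noteq> v \<and> {v, w} \<notin> {e. \<chi> e = c}}"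
      then have "v < N" and "w < N" and "v \<noteq> w"
        using assms(3) \<open>v \<in> X\<close> by auto
      then have "\<chi> {v, w} = 0 \<or> \<chi> {v, w} = 1"
        by (rule two_colouring_cases[OF assms(1)])
      then show "w \<in> colour_nbhd N \<chi> (1 - c) v"
        using w assms(2,3) unfolding colour_nbhd_def by auto
    qed
    then show "card {w\<in>X. w \<noteq> v \<and> {v, w} \<notin> {e. \<chi> e = c}} \<le> D"
      using assms(5) \<open>v \<in> X\<close> by (meson card_mono finite_colour_nbhd le_trans)
  qed
qed (use assms in auto)

lemma mono_clique_if_four_pow_le_card:
  assumes "edge_colouring 2 N \<chi>" and "X \<subseteq> {0..<N}" and "4 ^ s \<le> card X"
  shows "\<exists>c\<le>1. \<exists>K\<subseteq>X. card K = s \<and> clique K {e. \<chi> e = c}"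
proof -
  have "(s + s) choose s \<le> 2 ^ (s + s)"
    by (rule binomial_le_pow2)
  also have "(2::nat) ^ (s + s) = 4 ^ s"
    by (simp add: power_add flip: power_mult_distrib)
  finally have "(s + s) choose s \<le> card X"
    using assms(3) by linarith
  moreover have "finite X"
    using assms(2) finite_subset by blast
  ultimately obtain K where K: "K \<subseteq> X" "card K = s"
    and "clique K {e. \<chi> e = 0} \<or> indep K {e. \<chi> e = 0}"
    using clique_or_indep_if_choose_le_card[of X s s "{e. \<chi> e = 0}"] by blast
  moreover have "clique K {e. \<chi> e = 1}" if "indep K {e. \<chi> e = 0}"
    unfolding clique_def
  proof (intro ballI impI)
    fix u w assume "u \<in> K" "w \<in> K" "u \<noteq> w"
    moreover from this have "u < N" and "w < N"
      using K(1) assms(2) by auto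
    ultimately show "{u, w} \<in> {e. \<chi> e = 1}"
      using that two_colouring_cases[OF assms(1)] unfolding indep_def by fastforce
  qed
  ultimately show ?thesis
    by (metis le_refl zero_le)
qed

lemma card_Un_le_Diff_Diff_Int: "card (A \<union> B) \<le> card (A - B) + card (B - A) + card (A \<inter> B)"
proof -
  have "card (A \<union> B) = card ((A - B) \<union> (B - A) \<union> (A \<inter> B))"
    by (rule arg_cong[where f = card]) blast
  also have "\<dots> \<le> card ((A - B) \<union> (B - A)) + card (A \<inter> B)"
    by (rule card_Un_le)
  also have "\<dots> \<le> card (A - B) + card (B - A) + card (A \<inter> B)"
    using card_Un_le[of "A - B" "B - A"] by simp
  finally show ?thesis .
qed

lemma rich_vertices_cover:
  assumes "edge_colouring 2 N \<chi>" and "2 * d \<le> N"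
  shows "rich_vertices N \<chi> d 0 \<union> rich_vertices N \<chi> d 1 = {0..<N}"
proof (intro equalityI subsetI)
  fix v assume "v \<in> {0..<N}"
  then show "v \<in> rich_vertices N \<chi> d 0 \<union> rich_vertices N \<chi> d 1"
    using card_colour_nbhd_sum[OF assms(1), of v] assms(2) unfolding rich_vertices_def by auto
qed (use rich_vertices_subset in blast)

lemma clique_in_rich_vertices_Diff:
  assumes "edge_colouring 2 N \<chi>" and "c \<le> 1"
    and "a * (d + 1) \<le> card (rich_vertices N \<chi> d c - rich_vertices N \<chi> d (1 - c))"
  shows "\<exists>K\<subseteq>rich_vertices N \<chi> d c. card K = a \<and> clique K {e. \<chi> e = c}"
proof -
  have "\<exists>K\<subseteq>rich_vertices N \<chi> d c - rich_vertices N \<chi> d (1 - c). card K = a \<and> clique K {e. \<chi> e = c}"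
  proof (rule clique_if_other_colour_sparse[OF assms(1,2)])
    show "a * (d + 1) \<le> card (rich_vertices N \<chi> d c - rich_vertices N \<chi> d (1 - c))"
      by (rule assms(3))
    show "rich_vertices N \<chi> d c - rich_vertices N \<chi> d (1 - c) \<subseteq> {0..<N}"
      using rich_vertices_subset by blast
    show "\<forall>v\<in>rich_vertices N \<chi> d c - rich_vertices N \<chi> d (1 - c).
        card (colour_nbhd N \<chi> (1 - c) v) \<le> d"
      unfolding rich_vertices_def by auto
  qed
  then show ?thesis
    by blast
qed

lemma ramsey_arrow_2_clique_star:
  assumes "0 < s" and "s + l \<le> n" and "n + 3 * (s * (s + l) + 4 ^ s) \<le> N"
  shows "ramsey_arrow 2 N n (clique_star s l)"
  unfolding ramsey_arrow_def
proof (intro allI impI)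
  fix \<chi> assume col: "edge_colouring 2 N \<chi>"
  let ?R = "rich_vertices N \<chi> (s + l - 1)"
  have "s + l \<le> s * (s + l)"
    using assms(1) by simp
  then have "2 * (s + l - 1) \<le> N"
    using assms(3) by (simp add: algebra_simps)
  then have "N \<le> card (?R 0 - ?R 1) + card (?R 1 - ?R 0) + card (?R 0 \<inter> ?R 1)"
    using card_Un_le_Diff_Diff_Int[of "?R 0" "?R 1"] rich_vertices_cover[OF col] by simp
  then consider "s * (s + l) \<le> card (?R 0 - ?R 1)" | "s * (s + l) \<le> card (?R 1 - ?R 0)"
    | "4 ^ s \<le> card (?R 0 \<inter> ?R 1)"
    using assms(3) by (simp add: algebra_simps) linarith
  then obtain c K where "K \<subseteq> ?R c" "card K = s" "clique K {e. \<chi> e = c}"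
  proof cases
    case 1
    then have big: "s * (s + l - 1 + 1) \<le> card (?R 0 - ?R (1 - 0))"
      using assms(1) by simp
    obtain K where "K \<subseteq> ?R 0" "card K = s" "clique K {e. \<chi> e = 0}"
      using clique_in_rich_vertices_Diff[OF col _ big] by auto
    then show ?thesis
      by (rule that)
  next
    case 2
    then have big: "s * (s + l - 1 + 1) \<le> card (?R 1 - ?R (1 - 1))"
      using assms(1) by simp
    obtain K where "K \<subseteq> ?R 1" "card K = s" "clique K {e. \<chi> e = 1}"
      using clique_in_rich_vertices_Diff[OF col _ big] by auto
    then show ?thesis
      by (rule that)
  next
    case 3
    have "?R 0 \<inter> ?R 1 \<subseteq> {0..<N}"
      using rich_vertices_subset by blast
    then obtain c K where "c \<le> 1" "K \<subseteq> ?R 0 \<inter> ?R 1" "card K = s" "clique K {e. \<chi> e = c}"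
      using mono_clique_if_four_pow_le_card[OF col _ 3] by blast
    moreover from this have "K \<subseteq> ?R c"
      using le_Suc_eq[of c 0] by auto
    ultimately show ?thesis
      using that by blast
  qed
  then show "has_mono_copy N \<chi> n (clique_star s l)"
    using assms(1,2) \<open>s + l \<le> s * (s + l)\<close> assms(3)
    by (intro has_mono_copy_clique_star) auto
qed

section \<open>Three colours\<close>

definition block_colouring :: "nat \<Rightarrow> nat \<Rightarrow> nat set \<Rightarrow> nat" where
  "block_colouring k m e =
     (if \<forall>x\<in>e. \<forall>y\<in>e. x div m = y div m then 0
      else if \<forall>x\<in>e. \<forall>y\<in>e. x div m mod k = y div m mod k then 1
      else 2)"

lemma block_colouring_less_3: "block_colouring k m e < 3"
  unfolding block_colouring_def by simp

lemma block_colouring_doubleton: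
  "block_colouring k m {x, y} =
     (if x div m = y div m then 0 else if x div m mod k = y div m mod k then 1 else 2)"
  unfolding block_colouring_def by auto

lemma card_le_if_block_colouring_star:
  assumes "finite W" and "v \<in> W" and "\<forall>w\<in>W. w \<noteq> v \<longrightarrow> block_colouring k m {v, w} = 0"
    and "0 < m"
  shows "card W \<le> m"
proof -
  have "w div m = v div m" if "w \<in> W" for w
    using assms(3) that by (cases "w = v") (auto simp: block_colouring_doubleton split: if_splits)
  then have "inj_on (\<lambda>x. x mod m) W"
    by (intro inj_onI) (metis mult_div_mod_eq)
  moreover have "(\<lambda>x. x mod m) ` W \<subseteq> {0..<m}"
    using assms(4) by auto
  ultimately show ?thesis
    using card_inj_on_le[of _ W "{0..<m}"] by simp
qed

lemma block_class_less:
  fixes x k m :: nat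
  assumes "x < k * k * m"
  shows "x div m div k < k" and "x div m mod k < k"
proof -
  have "x div m < k * k"
    using assms by (rule less_mult_imp_div_less)
  then show "x div m div k < k"
    by (rule less_mult_imp_div_less)
  then show "x div m mod k < k"
    by simp
qed

lemma card_le_if_block_colouring_clique:
  assumes "K \<subseteq> {0..<k * k * m}" and "clique K {e. block_colouring k m e = c}"
    and "c = 1 \<or> c = 2"
  shows "card K \<le> k"
proof -
  have colour: "block_colouring k m {x, y} = c" if "x \<in> K" "y \<in> K" "x \<noteq> y" for x y
    using assms(2) that unfolding clique_def by simp
  have block_lt: "x div m div k < k" and class_lt: "x div m mod k < k" if "x \<in> K" for x
    using block_class_less[of x k m] assms(1) that by auto
  from assms(3) show ?thesis
  proof
    assume "c = 1"
    have "inj_on (\<lambda>x. x div m div k) K"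
    proof (rule inj_onI, rule ccontr)
      fix x y assume xy: "x \<in> K" "y \<in> K" "x div m div k = y div m div k" "x \<noteq> y"
      have "block_colouring k m {x, y} = 1"
        using colour[OF xy(1,2,4)] \<open>c = 1\<close> by simp
      then have "x div m \<noteq> y div m" and "x div m mod k = y div m mod k"
        unfolding block_colouring_doubleton by (simp_all split: if_splits)
      moreover have "x div m = y div m"
        using xy(3) \<open>x div m mod k = y div m mod k\<close> by (metis div_mult_mod_eq)
      ultimately show False
        by simp
    qed
    moreover have "(\<lambda>x. x div m div k) ` K \<subseteq> {0..<k}"
      using block_lt by auto
    ultimately show ?thesis
      using card_inj_on_le[of _ K "{0..<k}"] by simp
  next
    assume "c = 2"
    have "inj_on (\<lambda>x. x div m mod k) K"
    proof (rule inj_onI, rule ccontr)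
      fix x y assume "x \<in> K" "y \<in> K" "x div m mod k = y div m mod k" "x \<noteq> y"
      then show False
        using colour[of x y] \<open>c = 2\<close> by (simp add: block_colouring_doubleton split: if_splits)
    qed
    moreover have "(\<lambda>x. x div m mod k) ` K \<subseteq> {0..<k}"
      using class_lt by auto
    ultimately show ?thesis
      using card_inj_on_le[of _ K "{0..<k}"] by simp
  qed
qed

lemma not_ramsey_arrow_3_clique_star:
  assumes "2 \<le> s" and "s + l \<le> n"
  shows "\<not> ramsey_arrow 3 ((s - 1) * (s - 1) * (s + l - 1)) n (clique_star s l)"
proof
  define k where "k = s - 1"
  define m where "m = s + l - 1"
  let ?\<chi> = "block_colouring k m"
  assume "ramsey_arrow 3 ((s - 1) * (s - 1) * (s + l - 1)) n (clique_star s l)"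
  moreover have "edge_colouring 3 (k * k * m) ?\<chi>"
    unfolding edge_colouring_def by (simp add: block_colouring_less_3)
  ultimately have "has_mono_copy (k * k * m) ?\<chi> n (clique_star s l)"
    unfolding ramsey_arrow_def k_def m_def by blast
  then obtain f c where inj: "inj_on f {0..<s + l}" and f: "f ` {0..<s + l} \<subseteq> {0..<k * k * m}"
    and star: "\<forall>w\<in>f ` {0..<s + l}. w \<noteq> f 0 \<longrightarrow> ?\<chi> {f 0, w} = c"
    and clique: "clique (f ` {0..<s}) {e. ?\<chi> e = c}"
    using assms(2) by (rule has_mono_copy_clique_starE)
  have "c = ?\<chi> {f 0, f 1}"
    using star inj assms(1) by (simp add: inj_on_eq_iff)
  then consider "c = 0" | "c = 1 \<or> c = 2"
    unfolding block_colouring_doubleton by (auto split: if_splits)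
  then show False
  proof cases
    case 1
    then have "card (f ` {0..<s + l}) \<le> m"
      using star assms(1) unfolding m_def
      by (intro card_le_if_block_colouring_star[of _ "f 0"]) auto
    moreover have "card (f ` {0..<s + l}) = s + l"
      using inj by (simp add: card_image)
    ultimately show False
      using assms(1) unfolding m_def by simp
  next
    case 2
    have "f ` {0..<s} \<subseteq> {0..<k * k * m}"
      using f by auto
    then have "card (f ` {0..<s}) \<le> k"
      using clique 2 by (rule card_le_if_block_colouring_clique)
    moreover have "card (f ` {0..<s}) = s"
      using inj_on_subset[OF inj, of "{0..<s}"] by (simp add: card_image)
    ultimately show False
      using assms(1) unfolding k_def by simp
  qed
qed

section \<open>The family of graphs\<close>

lemma clique_star_parameters:
  assumes "2 \<le> s" and "4 ^ s \<le> n"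
  shows "s * s \<le> n" and "2 * s \<le> n" and "s + n div s \<le> n"
proof -
  have "s * s < 2 ^ s * 2 ^ s"
    using less_exp[of s] by (intro mult_strict_mono) auto
  also have "\<dots> = 4 ^ s"
    by (simp flip: power_mult_distrib)
  finally show "s * s \<le> n"
    using assms(2) by linarith
  moreover have "2 * s \<le> s * s"
    using assms(1) by simp
  ultimately show "2 * s \<le> n"
    by linarith
  moreover have "n div s \<le> n div 2"
    using assms(1) by (simp add: div_le_mono2)
  ultimately show "s + n div s \<le> n"
    by linarith
qed

lemma ramsey_number_2_clique_star_le:
  assumes "2 \<le> s" and "4 ^ s \<le> n"
  shows "ramsey_number 2 n (clique_star s (n div s)) \<le> 10 * n"
proof -
  note params = clique_star_parameters[OF assms]
  have "ramsey_number 2 n (clique_star s (n div s)) \<le> n + 3 * (s * (s + n div s) + 4 ^ s)"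
    using assms(1) params(3) by (intro ramsey_number_le ramsey_arrow_2_clique_star) auto
  also have "\<dots> = n + 3 * (s * s + s * (n div s) + 4 ^ s)"
    by (simp add: algebra_simps)
  also have "\<dots> \<le> n + 3 * (n + n + n)"
    using params(1) assms(2) div_times_less_eq_dividend[of n s]
    by (intro add_left_mono mult_left_mono add_mono) (auto simp: mult.commute)
  finally show ?thesis
    by simp
qed

lemma ramsey_number_3_clique_star_ge:
  assumes "2 \<le> s" and "4 ^ s \<le> n"
  shows "s * n \<le> 8 * ramsey_number 3 n (clique_star s (n div s))"
proof -
  define l where "l = n div s"
  note params = clique_star_parameters[OF assms]
  have R3_gt: "(s - 1) * (s - 1) * (s + l - 1) < ramsey_number 3 n (clique_star s l)"
    using assms(1) params(3) unfolding l_def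
    by (intro ramsey_number_gt simple_graph_clique_star not_ramsey_arrow_3_clique_star) auto
  have "n = s * l + n mod s"
    unfolding l_def by simp
  moreover have "n mod s < s"
    using assms(1) by simp
  ultimately have "n \<le> 2 * s * l"
    using params(2) by (simp add: algebra_simps)
  then have "s * n \<le> 2 * (s * s) * l"
    by (simp add: algebra_simps)
  also have "\<dots> \<le> 2 * ((2 * (s - 1)) * (2 * (s - 1))) * l"
    using assms(1) by (intro mult_le_mono) auto
  also have "\<dots> = 8 * ((s - 1) * (s - 1) * l)"
    by (simp add: algebra_simps)
  also have "\<dots> \<le> 8 * ((s - 1) * (s - 1) * (s + l - 1))"
    using assms(1) by simp
  also have "\<dots> < 8 * ramsey_number 3 n (clique_star s l)"
    using R3_gt by simp
  finally show ?thesis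
    unfolding l_def by simp
qed

text \<open>For \<open>n > 0\<close>, \<open>floorlog 4 n - 1\<close> is \<open>\<lfloor>log 4 n\<rfloor>\<close>.\<close>

definition clique_star_graph :: "nat \<Rightarrow> nat set set" where
  "clique_star_graph n =
     (let s = floorlog 4 n - 1 in if 2 \<le> s then clique_star s (n div s) else {})"

lemma four_pow_floorlog_le:
  assumes "2 \<le> floorlog 4 n - 1"
  shows "4 ^ (floorlog 4 n - 1) \<le> n"
  using floorlog_geD[of "floorlog 4 n" 4 n] assms by simp

lemma simple_graph_clique_star_graph: "simple_graph n (clique_star_graph n)"
proof (cases "2 \<le> floorlog 4 n - 1")
  case True
  then show ?thesis
    using clique_star_parameters(3)[OF True four_pow_floorlog_le[OF True]]
    unfolding clique_star_graph_def Let_def by (simp add: simple_graph_clique_star)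
next
  case False
  then show ?thesis
    unfolding clique_star_graph_def simple_graph_def by simp
qed

lemma ramsey_number_2_clique_star_graph_le: "ramsey_number 2 n (clique_star_graph n) \<le> 10 * n"
proof (cases "2 \<le> floorlog 4 n - 1")
  case True
  then show ?thesis
    using ramsey_number_2_clique_star_le[OF True four_pow_floorlog_le[OF True]]
    unfolding clique_star_graph_def Let_def by simp
next
  case False
  then show ?thesis
    using ramsey_number_le[OF ramsey_arrow_empty_graph, of 2 n]
    unfolding clique_star_graph_def by simp
qed

lemma ramsey_number_3_clique_star_graph_ge:
  assumes "16 \<le> n"
  shows "real n * ln (real n) \<le> 16 * ln 4 * real (ramsey_number 3 n (clique_star_graph n))"
proof -
  define s where "s = floorlog 4 n - 1"
  have "3 \<le> floorlog 4 n"
    using assms floorlog_ge_SucI[of 4 2 n] by simp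
  then have s: "2 \<le> s" "floorlog 4 n = s + 1"
    unfolding s_def by auto
  have "4 ^ (floorlog 4 n - 1) \<le> n \<and> n < 4 ^ floorlog 4 n"
    using floorlog_bounds[of n 4] assms by simp
  then have "4 ^ s \<le> n" and "n < 4 ^ (s + 1)"
    unfolding s_def[symmetric] s(2) by auto
  have "real n < 4 ^ (s + 1)"
    using \<open>n < 4 ^ (s + 1)\<close> by (metis of_nat_less_iff of_nat_numeral of_nat_power)
  then have "ln (real n) < ln (4 ^ (s + 1))"
    using assms by (intro ln_less_cancel_iff[THEN iffD2]) auto
  also have "\<dots> = (s + 1) * ln 4"
    by (subst ln_realpow) auto
  also have "\<dots> \<le> 2 * s * ln 4"
    using s(1) by (intro mult_right_mono) auto
  finally have "real n * ln (real n) \<le> real n * (2 * s * ln 4)"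
    by (intro mult_left_mono) auto
  also have "\<dots> = 2 * ln 4 * real (s * n)"
    by simp
  also have "\<dots> \<le> 2 * ln 4 * real (8 * ramsey_number 3 n (clique_star s (n div s)))"
    using ramsey_number_3_clique_star_ge[OF s(1) \<open>4 ^ s \<le> n\<close>]
    by (intro mult_left_mono of_nat_mono) auto
  also have "clique_star s (n div s) = clique_star_graph n"
    using s(1) unfolding clique_star_graph_def s_def Let_def by simp
  finally show ?thesis
    by simp
qed

theorem theorem1p3:
  shows "\<exists>G :: nat \<Rightarrow> nat set set.
           (\<forall>n. simple_graph n (G n)) \<and>
           (\<lambda>n. real (ramsey_number 2 n (G n))) \<in> O(\<lambda>n. real n) \<and>
           (\<lambda>n. real (ramsey_number 3 n (G n))) \<in> \<Omega>(\<lambda>n. real n * ln (real n))"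
proof (intro exI[of _ clique_star_graph] conjI allI)
  show "simple_graph n (clique_star_graph n)" for n
    by (rule simple_graph_clique_star_graph)
  have "real (ramsey_number 2 n (clique_star_graph n)) \<le> 10 * real n" for n
    using of_nat_mono[OF ramsey_number_2_clique_star_graph_le[of n]] by simp
  then show "(\<lambda>n. real (ramsey_number 2 n (clique_star_graph n))) \<in> O(\<lambda>n. real n)"
    by (intro bigoI[of _ 10] always_eventually allI) simp
  have "eventually (\<lambda>n. 1 / (16 * ln 4) * norm (real n * ln (real n))
      \<le> norm (real (ramsey_number 3 n (clique_star_graph n)))) at_top"
    using eventually_ge_at_top[of 16]
  proof eventually_elim
    case (elim n)
    then show ?case
      using ramsey_number_3_clique_star_graph_ge[OF elim] by (simp add: field_simps)
  qed
  then show "(\<lambda>n. real (ramsey_number 3 n (clique_star_graph n))) \<in> \<Omega>(\<lambda>n. real n * ln (real n))"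
    by (intro landau_omega.bigI[of "1 / (16 * ln 4)"]) auto
qed

end
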